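(* For any $(\boldsymbol{x}^1,\boldsymbol{x}^2),(\boldsymbol{x}^{\star,1},\boldsymbol{x}^{\star,2})\in(\mathbb{T}^3\times\mathbb{T}^3)\setminus\Delta$ there exist $N\in\mathbb{N}$ and $\underline{\omega}^N=(\omega_1,\dots,\omega_N)\in\Omega_0^N$ such that $$f_{\underline{\omega}^N}(\boldsymbol{x}^1)=\boldsymbol{x}^{\star,1}\qquad\text{and}\qquad f_{\underline{\omega}^N}(\boldsymbol{x}^2)=\boldsymbol{x}^{\star,2}.$$
   Context: $\mathbb{T}^3=\mathbb{R}^3/(2\pi\mathbb{Z})^3$ with points $\boldsymbol{x}=(x,y,z)$; $\Delta=\{(\boldsymbol{x}^1,\boldsymbol{x}^2)\in\mathbb{T}^3\times\mathbb{T}^3:\boldsymbol{x}^1=\boldsymbol{x}^2\}$. Fix $U>0$ and let $\Omega_0=[-U,U]^3\times[0,2\pi)^3$, with elements $\omega=(\mathsf{A},\mathsf{B},\mathsf{C},\alpha,\beta,\gamma)$. Define maps of $\mathbb{T}^3$: $f_{(\mathsf{A},\alpha)}(x,y,z)=(x+\mathsf{A}\sin(z+\alpha),\ y+\mathsf{A}\cos(z+\alpha),\ z)$, $f_{(\mathsf{B},\beta)}(x,y,z)=(x,\ y+\mathsf{B}\sin(x+\beta),\ z+\mathsf{B}\cos(x+\beta))$, $f_{(\mathsf{C},\gamma)}(x,y,z)=(x+\mathsf{C}\cos(y+\gamma),\ y,\ z+\mathsf{C}\sin(y+\gamma))$, and $f_\omega=f_{(\mathsf{C},\gamma)}\circ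 f_{(\mathsf{B},\beta)}\circ f_{(\mathsf{A},\alpha)}$. For $\underline{\omega}^N=(\omega_1,\dots,\omega_N)$, $f_{\underline{\omega}^N}=f_{\omega_N}\circ\cdots\circ f_{\omega_1}$. *)

theory Defs
  imports Complex_Main
begin

text \<open>Points of the torus T^3 = R^3/(2 pi Z)^3 are represented by real triples;
  two triples represent the same torus point iff all coordinate differences
  lie in 2 pi Z.\<close>

type_synonym pt = "real \<times> real \<times> real"
type_synonym param = "real \<times> real \<times> real \<times> real \<times> real \<times> real"

definition tcong :: "real \<Rightarrow> real \<Rightarrow> bool" where
  "tcong a b \<longleftrightarrow> (\<exists>k::int. a - b = 2 * pi * of_int k)"

definition torus_eq :: "pt \<Rightarrow> pt \<Rightarrow> bool" where
  "torus_eq p q \<longleftrightarrow> (case p of (x, y, z) \<Rightarrow> case q of (x', y', z') \<Rightarrow>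
      tcong x x' \<and> tcong y y' \<and> tcong z z')"

definition fA :: "real \<Rightarrow> real \<Rightarrow> pt \<Rightarrow> pt" where
  "fA A \<alpha> p = (case p of (x, y, z) \<Rightarrow> (x + A * sin (z + \<alpha>), y + A * cos (z + \<alpha>), z))"

definition fB :: "real \<Rightarrow> real \<Rightarrow> pt \<Rightarrow> pt" where
  "fB B \<beta> p = (case p of (x, y, z) \<Rightarrow> (x, y + B * sin (x + \<beta>), z + B * cos (x + \<beta>)))"

definition fC :: "real \<Rightarrow> real \<Rightarrow> pt \<Rightarrow> pt" where
  "fC C \<gamma> p = (case p of (x, y, z) \<Rightarrow> (x + C * cos (y + \<gamma>), y, z + C * sin (y + \<gamma>)))"

definition f_omega :: "param \<Rightarrow> pt \<Rightarrow> pt" where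
  "f_omega w = (case w of (A, B, C, \<alpha>, \<beta>, \<gamma>) \<Rightarrow> fC C \<gamma> \<circ> fB B \<beta> \<circ> fA A \<alpha>)"

definition Omega0 :: "real \<Rightarrow> param set" where
  "Omega0 U = {(A, B, C, \<alpha>, \<beta>, \<gamma>). A \<in> {-U..U} \<and> B \<in> {-U..U} \<and> C \<in> {-U..U}
      \<and> \<alpha> \<in> {0..<2*pi} \<and> \<beta> \<in> {0..<2*pi} \<and> \<gamma> \<in> {0..<2*pi}}"

text \<open>f_{omega^N} = f_{omega_N} o ... o f_{omega_1}: the first list element is applied first.\<close>
definition f_seq :: "param list \<Rightarrow> pt \<Rightarrow> pt" where
  "f_seq ws = fold f_omega ws"

end

theory Submission
  imports Defs
begin

(* Restrict to parameters in which only one of the three shears is active.  Such a shear is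
   inverted by negating its amplitude, so reachability of pairs by words of single shears is an
   equivalence relation, and it suffices to bring every off-diagonal pair to the normal form
   ((0,0,0), (0,0,pi)).  Iterating an A-shear n times gives an A-shear of arbitrary amplitude.
   If the z-coordinates of the two points differ modulo 2 pi, sum-to-product shows that a suitable
   A-shear moves the difference of their (x,y)-coordinates to any prescribed vector; if the
   z-coordinates agree, it translates both points by any prescribed vector.  The cyclic
   permutation of the coordinates conjugates the three shear families into each other, which
   transfers both facts to the other two coordinate planes, and four such moves reach the normal
   form. *)

lemma tcong_refl: "tcong a a"
  unfolding tcong_def by (rule exI[of _ 0]) simp

lemma torus_eq_refl: "torus_eq p p"
  by (cases p) (simp add: torus_eq_def tcong_refl)

lemma tcong_iff_sin_half: "tcong a b \<longleftrightarrow> sin ((b - a) / 2) = 0"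
proof -
  have "a - b = 2 * pi * of_int k \<longleftrightarrow> (b - a) / 2 = of_int (- k) * pi" for k :: int
    by (auto simp: field_simps)
  then show ?thesis
    unfolding tcong_def sin_zero_iff_int2 by (metis minus_minus)
qed

lemma not_tcong_add_pi: "\<not> tcong a (a + pi)"
  by (simp add: tcong_iff_sin_half)

lemma sin_cos_shift_surj:
  fixes X Y z :: real
  shows "\<exists>R a. R * sin (z + a) = X \<and> R * cos (z + a) = Y"
proof -
  obtain r t where "Y = r * cos t" "X = r * sin t"
    using polar_Ex[of Y X] by blast
  then show ?thesis
    by (intro exI[of _ r] exI[of _ "t - z"]) simp
qed

lemma sin_cos_difference_surj:
  fixes X Y z1 z2 :: real
  assumes "\<not> tcong z1 z2"
  shows "\<exists>R a. R * (sin (z2 + a) - sin (z1 + a)) = X \<and>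
               R * (cos (z2 + a) - cos (z1 + a)) = Y"
proof -
  define c where "c = 2 * sin ((z2 - z1) / 2)"
  define m where "m = (z1 + z2) / 2"
  have "c \<noteq> 0"
    using assms by (simp add: c_def tcong_iff_sin_half)
  obtain r t where rt: "X = r * cos t" "- Y = r * sin t"
    using polar_Ex[of X "- Y"] by blast
  have sin_diff: "sin (z2 + a) - sin (z1 + a) = c * cos (m + a)" for a
  proof -
    have "(z2 + a - (z1 + a)) / 2 = (z2 - z1) / 2" "(z2 + a + (z1 + a)) / 2 = m + a"
      by (simp_all add: m_def field_simps)
    then show ?thesis
      by (simp only: sin_diff_sin c_def)
  qed
  have cos_diff: "cos (z2 + a) - cos (z1 + a) = - c * sin (m + a)" for a
  proof -
    have "(z2 + a + (z1 + a)) / 2 = m + a" "(z1 + a - (z2 + a)) / 2 = - ((z2 - z1) / 2)"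
      by (simp_all add: m_def field_simps)
    then show ?thesis
      by (simp only: cos_diff_cos c_def sin_minus) simp
  qed
  show ?thesis
  proof (intro exI conjI)
    show "r / c * (sin (z2 + (t - m)) - sin (z1 + (t - m))) = X"
      using \<open>c \<noteq> 0\<close> by (simp add: sin_diff rt)
    show "r / c * (cos (z2 + (t - m)) - cos (z1 + (t - m))) = Y"
      using \<open>c \<noteq> 0\<close> rt(2) by (simp add: cos_diff)
  qed
qed

definition shear_params :: "real \<Rightarrow> param set" where
  "shear_params U =
     {(A, 0, 0, a, 0, 0) | A a. \<bar>A\<bar> \<le> U \<and> a \<in> {0..<2*pi}} \<union>
     {(0, B, 0, 0, b, 0) | B b. \<bar>B\<bar> \<le> U \<and> b \<in> {0..<2*pi}} \<union>
     {(0, 0, C, 0, 0, c) | C c. \<bar>C\<bar> \<le> U \<and> c \<in> {0..<2*pi}}"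

lemma shear_params_subset_Omega0: "shear_params U \<subseteq> Omega0 U"
  by (auto simp: shear_params_def Omega0_def)

lemma f_omega_shear_A [simp]: "f_omega (A, 0, 0, a, 0, 0) = fA A a"
  and f_omega_shear_B [simp]: "f_omega (0, B, 0, 0, b, 0) = fB B b"
  and f_omega_shear_C [simp]: "f_omega (0, 0, C, 0, 0, c) = fC C c"
  by (auto simp: fun_eq_iff f_omega_def fA_def fB_def fC_def)

definition shear_inverse :: "param \<Rightarrow> param" where
  "shear_inverse = (\<lambda>(A, B, C, a, b, c). (-A, -B, -C, a, b, c))"

lemma shear_inverse_in_shear_params:
  "w \<in> shear_params U \<Longrightarrow> shear_inverse w \<in> shear_params U"
  by (auto simp: shear_params_def shear_inverse_def)

lemma f_omega_shear_inverse:
  "w \<in> shear_params U \<Longrightarrow> f_omega (shear_inverse w) (f_omega w p) = p"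
  by (cases p) (auto simp: shear_params_def shear_inverse_def fA_def fB_def fC_def)

lemma f_seq_shear_inverse:
  "set ws \<subseteq> shear_params U \<Longrightarrow> f_seq (rev (map shear_inverse ws)) (f_seq ws p) = p"
  by (induction ws arbitrary: p) (auto simp: f_seq_def f_omega_shear_inverse)

definition pair_reach :: "real \<Rightarrow> pt \<Rightarrow> pt \<Rightarrow> pt \<Rightarrow> pt \<Rightarrow> bool" where
  "pair_reach U p q p' q' \<longleftrightarrow>
     (\<exists>ws. set ws \<subseteq> shear_params U \<and> f_seq ws p = p' \<and> f_seq ws q = q')"

lemma pair_reach_refl: "pair_reach U p q p q"
  unfolding pair_reach_def by (rule exI[of _ "[]"]) (simp add: f_seq_def)

lemma pair_reach_trans:
  assumes "pair_reach U p q p' q'" and "pair_reach U p' q' p'' q''"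
  shows "pair_reach U p q p'' q''"
proof -
  obtain ws vs where "set ws \<subseteq> shear_params U" "f_seq ws p = p'" "f_seq ws q = q'"
    and "set vs \<subseteq> shear_params U" "f_seq vs p' = p''" "f_seq vs q' = q''"
    using assms unfolding pair_reach_def by blast
  then show ?thesis
    unfolding pair_reach_def by (intro exI[of _ "ws @ vs"]) (auto simp: f_seq_def)
qed

lemma pair_reach_sym:
  assumes "pair_reach U p q p' q'"
  shows "pair_reach U p' q' p q"
proof -
  obtain ws where "set ws \<subseteq> shear_params U" "f_seq ws p = p'" "f_seq ws q = q'"
    using assms unfolding pair_reach_def by blast
  then show ?thesis
    unfolding pair_reach_def
    by (intro exI[of _ "rev (map shear_inverse ws)"])
      (auto simp: f_seq_shear_inverse shear_inverse_in_shear_params)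
qed

definition rot :: "pt \<Rightarrow> pt" where
  "rot = (\<lambda>(x, y, z). (y, z, x))"

lemma rot_apply [simp]: "rot (x, y, z) = (y, z, x)"
  by (simp add: rot_def)

lemma rot_rot_rot [simp]: "rot (rot (rot p)) = p"
  by (cases p) simp

(* For a general parameter the order of composition in f_omega is not preserved, which is why
   the symmetry is only available for single shears. *)
definition rot_param :: "param \<Rightarrow> param" where
  "rot_param = (\<lambda>(A, B, C, a, b, c). (B, C, A, b, c, a))"

lemma rot_param_in_shear_params:
  "w \<in> shear_params U \<Longrightarrow> rot_param w \<in> shear_params U"
  by (auto simp: shear_params_def rot_param_def)

lemma rot_f_omega:
  "w \<in> shear_params U \<Longrightarrow> rot (f_omega w p) = f_omega (rot_param w) (rot p)"
  by (cases p) (auto simp: shear_params_def rot_param_def fA_def fB_def fC_def)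

lemma rot_f_seq:
  "set ws \<subseteq> shear_params U \<Longrightarrow> rot (f_seq ws p) = f_seq (map rot_param ws) (rot p)"
  by (induction ws arbitrary: p) (auto simp: f_seq_def rot_f_omega)

lemma pair_reach_rot:
  assumes "pair_reach U p q p' q'"
  shows "pair_reach U (rot p) (rot q) (rot p') (rot q')"
proof -
  obtain ws where "set ws \<subseteq> shear_params U" "f_seq ws p = p'" "f_seq ws q = q'"
    using assms unfolding pair_reach_def by blast
  then show ?thesis
    unfolding pair_reach_def
    by (intro exI[of _ "map rot_param ws"]) (auto simp: rot_f_seq rot_param_in_shear_params)
qed

lemma pair_reach_rot_iff:
  "pair_reach U (rot p) (rot q) (rot p') (rot q') \<longleftrightarrow> pair_reach U p q p' q'"
proof
  assume "pair_reach U (rot p) (rot q) (rot p') (rot q')"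
  from pair_reach_rot[OF pair_reach_rot[OF this]] show "pair_reach U p q p' q'"
    by simp
qed (rule pair_reach_rot)

lemma fA_funpow: "fA A a ^^ n = fA (real n * A) a"
  by (induction n) (auto simp: fun_eq_iff fA_def algebra_simps)

lemma fA_cong_phase: "cos a = cos a' \<Longrightarrow> sin a = sin a' \<Longrightarrow> fA A a = fA A a'"
  by (simp add: fun_eq_iff fA_def sin_add cos_add)

lemma pair_reach_fA:
  assumes "U > 0"
  shows "pair_reach U p q (fA R a p) (fA R a q)"
proof -
  obtain n :: nat where n: "\<bar>R\<bar> / U < n"
    using reals_Archimedean2 by blast
  have "\<bar>R\<bar> / U \<ge> 0"
    using assms by simp
  with n have "real n > 0"
    by linarith
  define A where "A = R / n"
  have "\<bar>R\<bar> < U * n"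
    using n assms by (simp add: pos_divide_less_eq mult.commute)
  then have A: "\<bar>A\<bar> \<le> U" "real n * A = R"
    using \<open>real n > 0\<close> by (simp_all add: A_def abs_div pos_divide_le_eq)
  have "(cos a)\<^sup>2 + (sin a)\<^sup>2 = 1"
    by simp
  then obtain a' where a': "0 \<le> a'" "a' < 2 * pi" "cos a = cos a'" "sin a = sin a'"
    by (rule sincos_total_2pi)
  have "f_seq (replicate n (A, 0, 0, a', 0, 0)) = fA R a"
    using fA_cong_phase[OF a'(3,4)] by (simp add: f_seq_def fA_funpow A)
  moreover have "set (replicate n (A, 0, 0, a', 0, 0)) \<subseteq> shear_params U"
    using A a' by (auto simp: shear_params_def)
  ultimately show ?thesis
    unfolding pair_reach_def by auto
qed

lemma pair_reach_translate_xy: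
  assumes "U > 0"
  shows "pair_reach U (x1, y1, z) (x2, y2, z) (x1 + X, y1 + Y, z) (x2 + X, y2 + Y, z)"
proof -
  obtain R a where "R * sin (z + a) = X" "R * cos (z + a) = Y"
    using sin_cos_shift_surj by blast
  with pair_reach_fA[OF assms, of "(x1, y1, z)" "(x2, y2, z)" R a] show ?thesis
    by (simp add: fA_def)
qed

lemma pair_reach_translate_yz:
  assumes "U > 0"
  shows "pair_reach U (x, y1, z1) (x, y2, z2) (x, y1 + Y, z1 + Z) (x, y2 + Y, z2 + Z)"
  using pair_reach_translate_xy[OF assms]
    pair_reach_rot_iff[of U "(x, y1, z1)" "(x, y2, z2)" "(x, y1 + Y, z1 + Z)" "(x, y2 + Y, z2 + Z)"]
  by simp

lemma pair_reach_translate_zx: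
  assumes "U > 0"
  shows "pair_reach U (x1, y, z1) (x2, y, z2) (x1 + X, y, z1 + Z) (x2 + X, y, z2 + Z)"
  using pair_reach_translate_yz[OF assms]
    pair_reach_rot_iff[of U "(x1, y, z1)" "(x2, y, z2)" "(x1 + X, y, z1 + Z)" "(x2 + X, y, z2 + Z)"]
  by simp

lemma pair_reach_adjust_xy:
  assumes "U > 0" and "\<not> tcong z1 z2"
  shows "\<exists>x y. pair_reach U (x1, y1, z1) (x2, y2, z2) (x, y, z1) (x + X, y + Y, z2)"
proof -
  obtain R a where R: "R * (sin (z2 + a) - sin (z1 + a)) = X - (x2 - x1)"
      "R * (cos (z2 + a) - cos (z1 + a)) = Y - (y2 - y1)"
    using sin_cos_difference_surj[OF assms(2)] by blast
  have "fA R a (x1, y1, z1) = (x1 + R * sin (z1 + a), y1 + R * cos (z1 + a), z1)"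
    by (simp add: fA_def)
  moreover have "fA R a (x2, y2, z2) = (x1 + R * sin (z1 + a) + X, y1 + R * cos (z1 + a) + Y, z2)"
    using R by (simp add: fA_def algebra_simps)
  ultimately show ?thesis
    using pair_reach_fA[OF assms(1), of "(x1, y1, z1)" "(x2, y2, z2)" R a] by auto
qed

lemma pair_reach_adjust_yz:
  assumes "U > 0" and "\<not> tcong x1 x2"
  shows "\<exists>y z. pair_reach U (x1, y1, z1) (x2, y2, z2) (x1, y, z) (x2, y + Y, z + Z)"
proof -
  obtain y z where "pair_reach U (y1, z1, x1) (y2, z2, x2) (y, z, x1) (y + Y, z + Z, x2)"
    using pair_reach_adjust_xy[OF assms] by blast
  then show ?thesis
    using pair_reach_rot_iff[of U "(x1, y1, z1)" "(x2, y2, z2)" "(x1, y, z)" "(x2, y + Y, z + Z)"]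
    by auto
qed

lemma pair_reach_adjust_zx:
  assumes "U > 0" and "\<not> tcong y1 y2"
  shows "\<exists>x z. pair_reach U (x1, y1, z1) (x2, y2, z2) (x, y1, z) (x + X, y2, z + Z)"
proof -
  obtain z x where "pair_reach U (y1, z1, x1) (y2, z2, x2) (y1, z, x) (y2, z + Z, x + X)"
    using pair_reach_adjust_yz[OF assms] by blast
  then show ?thesis
    using pair_reach_rot_iff[of U "(x1, y1, z1)" "(x2, y2, z2)" "(x, y1, z)" "(x + X, y2, z + Z)"]
    by auto
qed

lemma pair_reach_apart_x:
  assumes "U > 0" and "\<not> torus_eq p q"
  shows "\<exists>x1 y1 z1 x2 y2 z2.
           pair_reach U p q (x1, y1, z1) (x2, y2, z2) \<and> \<not> tcong x1 x2"
proof -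
  obtain x1 y1 z1 x2 y2 z2 where pq: "p = (x1, y1, z1)" "q = (x2, y2, z2)"
    by (cases p, cases q) auto
  consider "\<not> tcong x1 x2" | "\<not> tcong z1 z2" | "\<not> tcong y1 y2"
    using assms(2) unfolding pq torus_eq_def by auto
  then show ?thesis
  proof cases
    case 1
    then show ?thesis
      using pair_reach_refl pq by blast
  next
    case 2
    then obtain x y where "pair_reach U p q (x, y, z1) (x + pi, y, z2)"
      using pair_reach_adjust_xy[OF assms(1), of z1 z2 x1 y1 x2 y2 pi 0] pq by auto
    then show ?thesis
      using not_tcong_add_pi by blast
  next
    case 3
    then obtain x z where "pair_reach U p q (x, y1, z) (x + pi, y2, z)"
      using pair_reach_adjust_zx[OF assms(1), of y1 y2 x1 z1 x2 z2 pi 0] pq by auto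
    then show ?thesis
      using not_tcong_add_pi by blast
  qed
qed

lemma pair_reach_normal_form:
  assumes "U > 0" and "\<not> torus_eq p q"
  shows "pair_reach U p q (0, 0, 0) (0, 0, pi)"
proof -
  obtain x1 y1 z1 x2 y2 z2 where
    r1: "pair_reach U p q (x1, y1, z1) (x2, y2, z2)" and "\<not> tcong x1 x2"
    using pair_reach_apart_x[OF assms] by blast
  then obtain y z where r2: "pair_reach U (x1, y1, z1) (x2, y2, z2) (x1, y, z) (x2, y, z + pi)"
    using pair_reach_adjust_yz[OF assms(1), of x1 x2 y1 z1 y2 z2 0 pi] by auto
  obtain x y' where r3: "pair_reach U (x1, y, z) (x2, y, z + pi) (x, y', z) (x, y', z + pi)"
    using pair_reach_adjust_xy[OF assms(1) not_tcong_add_pi[of z], of x1 y x2 y 0 0] by auto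
  have r4: "pair_reach U (x, y', z) (x, y', z + pi) (0, y', 0) (0, y', pi)"
    using pair_reach_translate_zx[OF assms(1), of x y' z x "z + pi" "- x" "- z"] by simp
  have r5: "pair_reach U (0, y', 0) (0, y', pi) (0, 0, 0) (0, 0, pi)"
    using pair_reach_translate_yz[OF assms(1), of 0 y' 0 y' pi "- y'" 0] by simp
  show ?thesis
    using pair_reach_trans[OF r1 pair_reach_trans[OF r2 pair_reach_trans[OF r3
            pair_reach_trans[OF r4 r5]]]] .
qed

theorem proposition3p6:
  fixes U :: real and x1 x2 xs1 xs2 :: pt
  assumes "U > 0"
    and "\<not> torus_eq x1 x2"
    and "\<not> torus_eq xs1 xs2"
  shows "\<exists>(N::nat) ws. length ws = N \<and> set ws \<subseteq> Omega0 U \<and>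
           torus_eq (f_seq ws x1) xs1 \<and> torus_eq (f_seq ws x2) xs2"
proof -
  have "pair_reach U x1 x2 (0, 0, 0) (0, 0, pi)" and "pair_reach U (0, 0, 0) (0, 0, pi) xs1 xs2"
    using pair_reach_normal_form[OF assms(1,2)] pair_reach_sym[OF pair_reach_normal_form[OF assms(1,3)]]
    by auto
  then have "pair_reach U x1 x2 xs1 xs2"
    by (rule pair_reach_trans)
  then obtain ws where "set ws \<subseteq> shear_params U" "f_seq ws x1 = xs1" "f_seq ws x2 = xs2"
    unfolding pair_reach_def by blast
  then show ?thesis
    using shear_params_subset_Omega0 torus_eq_refl by blast
qed

end
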